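(* In the multi-parameter setting described in the context, $H(\theta)\le C_\Upsilon(\theta)$ as $m\times m$ real symmetric matrices, i.e. $v^TH(\theta)v\le v^TC_\Upsilon(\theta)v$ for all $v\in\mathbb{R}^m$.
   Context: A multi-parameter quantum channel on density matrices on $\mathbb{C}^d$ is $\rho_0\mapsto\sum_kE_k(\theta)\rho_0E_k(\theta)^\dagger$ with $\theta=(\theta^1,\dots,\theta^m)\in\mathbb{R}^m$, Kraus operators differentiable in $\theta$, $\sum_kE_k^\dagger E_k=I$. The input is a fixed pure state $\rho_0=|\psi_0\rangle\langle\psi_0|$. Canonical Kraus operators $\{\Upsilon_k(\theta)\}_{k=1}^d$: a differentiable Kraus representation of the same channel with $\mathrm{tr}\{\Upsilon_k\rho_0\Upsilon_j^\dagger\}=\delta_{jk}p_k(\theta)$; the output is $\rho_{out}(\theta)=\sum_kp_k(\theta)|w_k(\theta)\rangle\langle w_k(\theta)|$ with $\{|w_k(\theta)\rangle\}$ an orthonormal basis differentiable in $\theta$ and $|w_k\rangle=p_k^{-1/2}\Upsilon_k|\psi_0\rangle$ when $p_k>0$. Write $X^{(j)}=\partial X/\partial\theta^j$. The multi-parameter SM bound is the matrix $C_\Upsilon(\theta)_{jk}=4\sum_l\mathrm{Re}\,\mathrm{tr}\{\Upsilon_l^{(j)}\rho_0\Upsilon_l^{(k)\dagger}\}$. The SLD quantum information matrix is $H(\theta)_{jk}=\mathrm{Re}\,\mathrm{tr}\{\lambda^{(j)}\rho_{out}\lambda^{(k)}\}$, where $\lambda^{(j)}$ is a self-adjoint solution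 of $\partial\rho_{out}/\partial\theta^j=\frac12(\rho_{out}\lambda^{(j)}+\lambda^{(j)}\rho_{out})$. *)

theory Defs
  imports "HOL-Analysis.Analysis"
begin


definition adj :: "complex^'d^'d \<Rightarrow> complex^'d^'d" where
  "adj A = (\<chi> i j. cnj (A $ j $ i))"

definition cinner :: "complex^'d \<Rightarrow> complex^'d \<Rightarrow> complex" where
  "cinner u v = (\<Sum>i\<in>UNIV. cnj (u $ i) * v $ i)"

definition ketbra :: "complex^'d \<Rightarrow> complex^'d \<Rightarrow> complex^'d^'d" where
  "ketbra u v = (\<chi> i j. u $ i * cnj (v $ j))"

definition pderiv :: "(real^'m \<Rightarrow> 'a::real_normed_vector) \<Rightarrow> real^'m \<Rightarrow> 'm \<Rightarrow> 'a" where
  "pderiv f \<theta> j = frechet_derivative f (at \<theta>) (axis j 1)"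

definition kraus_apply :: "('k::finite \<Rightarrow> complex^'d^'d) \<Rightarrow> complex^'d^'d \<Rightarrow> complex^'d^'d" where
  "kraus_apply K \<rho> = (\<Sum>k\<in>UNIV. K k ** \<rho> ** adj (K k))"

definition SM_bound :: "('d::finite \<Rightarrow> real^'m \<Rightarrow> complex^'d^'d) \<Rightarrow> complex^'d^'d \<Rightarrow> real^'m \<Rightarrow> real^'m^'m" where
  "SM_bound U \<rho>0 \<theta> = (\<chi> j k. 4 * (\<Sum>l\<in>UNIV.
       Re (trace (pderiv (U l) \<theta> j ** \<rho>0 ** adj (pderiv (U l) \<theta> k)))))"

definition SLD_info :: "('m::finite \<Rightarrow> complex^'d^'d) \<Rightarrow> complex^'d^'d \<Rightarrow> real^'m^'m" where
  "SLD_info L \<rho> = (\<chi> j k. Re (trace (L j ** \<rho> ** L k)))"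

end

theory Submission imports Defs begin

text \<open>For \<open>v \<in> \<real>\<^sup>m\<close> put \<open>\<Lambda> = \<Sum>\<^sub>j v\<^sub>j \<lambda>\<^sub>j\<close> and \<open>X\<^sub>l = \<Sum>\<^sub>j v\<^sub>j \<partial>\<^sub>j \<Upsilon>\<^sub>l\<close>. Then
  \<open>v\<^sup>T H v = tr (\<Lambda> \<rho> \<Lambda>) = \<Sum>\<^sub>l |a\<^sub>l|\<^sup>2\<close> with \<open>a\<^sub>l = \<Lambda> \<Upsilon>\<^sub>l \<psi>\<^sub>0\<close>, and
  \<open>v\<^sup>T C\<^sub>\<Upsilon> v = 4 \<Sum>\<^sub>l |X\<^sub>l \<psi>\<^sub>0|\<^sup>2\<close>. Differentiating \<open>\<rho> = \<Sum>\<^sub>l \<Upsilon>\<^sub>l \<rho>\<^sub>0 \<Upsilon>\<^sub>l\<^sup>\<dagger>\<close> in direction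
  \<open>v\<close> and pairing the SLD equation with \<open>\<Lambda>\<close> gives
  \<open>tr (\<Lambda> \<rho> \<Lambda>) = 2 \<Sum>\<^sub>l Re \<langle>X\<^sub>l \<psi>\<^sub>0, a\<^sub>l\<rangle> \<le> \<Sum>\<^sub>l (|a\<^sub>l|\<^sup>2 / 2 + 2 |X\<^sub>l \<psi>\<^sub>0|\<^sup>2)\<close>,
  and absorbing the first term on the right gives the claim.\<close>

lemma adj_add: "adj (A + B) = adj A + adj B"
  by (simp add: adj_def vec_eq_iff)

lemma adj_scaleR: "adj (r *\<^sub>R A) = r *\<^sub>R adj A"
  by (simp add: adj_def vec_eq_iff)

lemma adj_matrix_mult: "adj (A ** B) = adj B ** adj A"
  by (simp add: adj_def vec_eq_iff matrix_matrix_mult_def mult.commute)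

lemma adj_sum: "adj (\<Sum>i\<in>S. f i) = (\<Sum>i\<in>S. adj (f i))"
  by (induction S rule: infinite_finite_induct) (auto simp: adj_add adj_def vec_eq_iff)

lemma matrix_add_rdistrib: "(A + B) ** (C :: 'a::semiring_1^'n^'p) = A ** C + B ** C"
  by (simp add: vec_eq_iff matrix_matrix_mult_def distrib_right sum.distrib)

lemma matrix_sum_rdistrib: "(\<Sum>i\<in>S. f i) ** (B :: 'a::semiring_1^'n^'p) = (\<Sum>i\<in>S. f i ** B)"
  by (induction S rule: infinite_finite_induct) (auto simp: matrix_add_rdistrib)

lemma matrix_sum_ldistrib: "(B :: 'a::semiring_1^'n^'p) ** (\<Sum>i\<in>S. f i) = (\<Sum>i\<in>S. B ** f i)"
  by (induction S rule: infinite_finite_induct) (auto simp: matrix_add_ldistrib)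

lemma trace_scaleR: "trace (r *\<^sub>R (A :: 'a::real_algebra_1^'n^'n)) = r *\<^sub>R trace A"
  by (simp add: trace_def scaleR_sum_right)

lemma trace_sum: "trace (\<Sum>i\<in>S. (f i :: 'a::comm_semiring_1^'n^'n)) = (\<Sum>i\<in>S. trace (f i))"
  by (induction S rule: infinite_finite_induct) (auto simp: trace_add trace_0[unfolded mat_0])

lemma sum_matrix_vector_mult: "(\<Sum>i\<in>S. A i) *v x = (\<Sum>i\<in>S. A i *v x)"
  by (induction S rule: infinite_finite_induct) (auto simp: matrix_vector_mult_add_rdistrib)

lemma bounded_bilinear_sandwich: "bounded_bilinear (\<lambda>A C. A ** R ** adj (C :: complex^'d^'d))"
proof -
  have "bilinear (\<lambda>A C. A ** R ** adj (C :: complex^'d^'d))"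
    unfolding bilinear_def
    by (auto intro!: linearI simp: matrix_add_rdistrib matrix_add_ldistrib adj_add adj_scaleR
        scalar_matrix_assoc matrix_scalar_ac)
  then show ?thesis
    by (rule bilinear_conv_bounded_bilinear[THEN iffD1])
qed

lemma trace_sandwich_ketbra: "trace (A ** ketbra \<psi> \<psi> ** adj C) = cinner (C *v \<psi>) (A *v \<psi>)"
proof -
  have "trace (A ** ketbra \<psi> \<psi> ** adj C)
      = (\<Sum>i\<in>UNIV. \<Sum>b\<in>UNIV. \<Sum>c\<in>UNIV. A$i$c * \<psi>$c * cnj (\<psi>$b) * cnj (C$i$b))"
    unfolding trace_def ketbra_def adj_def matrix_matrix_mult_def
    by (simp add: sum_distrib_right sum_distrib_left mult_ac)
  also have "\<dots> = cinner (C *v \<psi>) (A *v \<psi>)"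
    unfolding cinner_def matrix_vector_mult_def
    by (simp add: sum_product mult_ac, rule sum.cong, simp, rule sum.swap)
  finally show ?thesis .
qed

lemma cinner_cross_le: "Re (cinner x a + cinner a x) \<le> 1/2 * Re (cinner a a) + 2 * Re (cinner x x)"
proof -
  have "Re (cnj (x$i) * a$i + cnj (a$i) * x$i) \<le> 1/2 * Re (cnj (a$i) * a$i) + 2 * Re (cnj (x$i) * x$i)"
    for i
  proof -
    have "0 \<le> (Re (a$i) - 2 * Re (x$i))\<^sup>2 + (Im (a$i) - 2 * Im (x$i))\<^sup>2"
      by simp
    then show ?thesis
      by (simp add: algebra_simps power2_eq_square)
  qed
  then have "(\<Sum>i\<in>UNIV. Re (cnj (x$i) * a$i + cnj (a$i) * x$i))
      \<le> (\<Sum>i\<in>UNIV. 1/2 * Re (cnj (a$i) * a$i) + 2 * Re (cnj (x$i) * x$i))"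
    by (rule sum_mono)
  then show ?thesis
    unfolding cinner_def Re_sum[symmetric] sum.distrib[symmetric]
    by (simp only: Re_sum sum.distrib sum_distrib_left)
qed

lemma sum_scaleR_pderiv:
  assumes "f differentiable (at \<theta>)"
  shows "(\<Sum>j\<in>UNIV. v$j *\<^sub>R pderiv f \<theta> j) = frechet_derivative f (at \<theta>) v"
proof -
  have "linear (frechet_derivative f (at \<theta>))"
    using assms frechet_derivative_works has_derivative_linear by blast
  then have "frechet_derivative f (at \<theta>) (\<Sum>j\<in>UNIV. v$j *\<^sub>R axis j 1)
      = (\<Sum>j\<in>UNIV. v$j *\<^sub>R frechet_derivative f (at \<theta>) (axis j 1))"
    by (simp add: linear_sum linear_scale)
  then show ?thesis
    by (simp add: pderiv_def basis_expansion flip: scalar_mult_eq_scaleR)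
qed

lemma frechet_derivative_kraus_apply:
  assumes "\<And>l. K l differentiable (at \<theta>)"
  shows kraus_apply_differentiable: "(\<lambda>t. kraus_apply (\<lambda>l. K l t) \<rho>) differentiable (at \<theta>)"
    and "frechet_derivative (\<lambda>t. kraus_apply (\<lambda>l. K l t) \<rho>) (at \<theta>) h
      = (\<Sum>l\<in>UNIV. K l \<theta> ** \<rho> ** adj (frechet_derivative (K l) (at \<theta>) h)
          + frechet_derivative (K l) (at \<theta>) h ** \<rho> ** adj (K l \<theta>))"
proof -
  have "((\<lambda>t. kraus_apply (\<lambda>l. K l t) \<rho>) has_derivative
      (\<lambda>h. \<Sum>l\<in>UNIV. K l \<theta> ** \<rho> ** adj (frechet_derivative (K l) (at \<theta>) h)
        + frechet_derivative (K l) (at \<theta>) h ** \<rho> ** adj (K l \<theta>))) (at \<theta>)"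
    unfolding kraus_apply_def
    by (intro has_derivative_sum bounded_bilinear.FDERIV[OF bounded_bilinear_sandwich]
        frechet_derivative_works[THEN iffD1] assms)
  then show "(\<lambda>t. kraus_apply (\<lambda>l. K l t) \<rho>) differentiable (at \<theta>)"
    and "frechet_derivative (\<lambda>t. kraus_apply (\<lambda>l. K l t) \<rho>) (at \<theta>) h
      = (\<Sum>l\<in>UNIV. K l \<theta> ** \<rho> ** adj (frechet_derivative (K l) (at \<theta>) h)
          + frechet_derivative (K l) (at \<theta>) h ** \<rho> ** adj (K l \<theta>))"
    by (auto intro: differentiableI simp: frechet_derivative_at[symmetric])
qed

lemma quadratic_form_sandwich:
  fixes P :: "'m::finite \<Rightarrow> complex^'d^'d"
  shows "v \<bullet> ((\<chi> j k. Re (trace (P j ** R ** adj (P k)))) *v v)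
    = Re (trace ((\<Sum>j\<in>UNIV. v$j *\<^sub>R P j) ** R ** adj (\<Sum>k\<in>UNIV. v$k *\<^sub>R P k)))"
proof -
  interpret sandwich: bounded_bilinear "\<lambda>A C. A ** R ** adj (C :: complex^'d^'d)"
    by (rule bounded_bilinear_sandwich)
  have "v \<bullet> ((\<chi> j k. Re (trace (P j ** R ** adj (P k)))) *v v)
      = (\<Sum>j\<in>UNIV. \<Sum>k\<in>UNIV. (v$k * v$j) * Re (trace (P j ** R ** adj (P k))))"
    by (simp add: inner_vec_def matrix_vector_mult_def sum_distrib_left mult_ac)
  also have "\<dots> = (\<Sum>k\<in>UNIV. \<Sum>j\<in>UNIV. (v$k * v$j) * Re (trace (P j ** R ** adj (P k))))"
    by (rule sum.swap)
  also have "\<dots> = Re (trace ((\<Sum>j\<in>UNIV. v$j *\<^sub>R P j) ** R ** adj (\<Sum>k\<in>UNIV. v$k *\<^sub>R P k)))"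
    by (simp only: sandwich.sum_left sandwich.sum_right sandwich.scaleR_left sandwich.scaleR_right
        scaleR_sum_right scaleR_scaleR trace_sum trace_scaleR Re_sum scaleR_complex.sel(1))
  finally show ?thesis .
qed

lemma quadratic_form_SLD_info:
  assumes "\<And>j. adj (L j) = L j"
  shows "v \<bullet> (SLD_info L \<rho> *v v)
    = Re (trace ((\<Sum>j\<in>UNIV. v$j *\<^sub>R L j) ** \<rho> ** (\<Sum>j\<in>UNIV. v$j *\<^sub>R L j)))"
proof -
  have "SLD_info L \<rho> = (\<chi> j k. Re (trace (L j ** \<rho> ** adj (L k))))"
    by (simp add: SLD_info_def assms)
  moreover have "adj (\<Sum>j\<in>UNIV. v$j *\<^sub>R L j) = (\<Sum>j\<in>UNIV. v$j *\<^sub>R L j)"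
    by (simp add: adj_sum adj_scaleR assms)
  ultimately show ?thesis
    using quadratic_form_sandwich[of v L \<rho>] by simp
qed

lemma quadratic_form_SM_bound:
  assumes "\<And>l. U l differentiable (at \<theta>)"
  shows "v \<bullet> (SM_bound U \<rho>0 \<theta> *v v) = 4 * (\<Sum>l\<in>UNIV.
    Re (trace (frechet_derivative (U l) (at \<theta>) v ** \<rho>0 ** adj (frechet_derivative (U l) (at \<theta>) v))))"
proof -
  have "SM_bound U \<rho>0 \<theta>
      = 4 *\<^sub>R (\<Sum>l\<in>UNIV. \<chi> j k. Re (trace (pderiv (U l) \<theta> j ** \<rho>0 ** adj (pderiv (U l) \<theta> k))))"
    by (simp add: SM_bound_def vec_eq_iff sum_component)
  then have "v \<bullet> (SM_bound U \<rho>0 \<theta> *v v) = 4 * (\<Sum>l\<in>UNIV.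
      v \<bullet> ((\<chi> j k. Re (trace (pderiv (U l) \<theta> j ** \<rho>0 ** adj (pderiv (U l) \<theta> k)))) *v v))"
    by (simp add: scaleR_matrix_vector_assoc[symmetric] sum_matrix_vector_mult inner_sum_right)
  then show ?thesis
    by (simp add: quadratic_form_sandwich sum_scaleR_pderiv assms)
qed

lemma SLD_quadratic_le_sandwich_derivative:
  fixes A D :: "'l::finite \<Rightarrow> complex^'d^'d" and \<Lambda> :: "complex^'d^'d" and \<psi> :: "complex^'d"
  defines "\<rho>0 \<equiv> ketbra \<psi> \<psi>"
  defines "\<rho> \<equiv> \<Sum>l\<in>UNIV. A l ** \<rho>0 ** adj (A l)"
  assumes \<Lambda>_sa: "adj \<Lambda> = \<Lambda>"
    and sld: "(\<Sum>l\<in>UNIV. A l ** \<rho>0 ** adj (D l) + D l ** \<rho>0 ** adj (A l))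
      = (1/2 :: real) *\<^sub>R (\<rho> ** \<Lambda> + \<Lambda> ** \<rho>)"
  shows "Re (trace (\<Lambda> ** \<rho> ** \<Lambda>)) \<le> 4 * (\<Sum>l\<in>UNIV. Re (trace (D l ** \<rho>0 ** adj (D l))))"
proof -
  define a where "a l = (\<Lambda> ** A l) *v \<psi>" for l
  define x where "x l = D l *v \<psi>" for l
  have sq: "Re (trace (\<Lambda> ** \<rho> ** \<Lambda>)) = (\<Sum>l\<in>UNIV. Re (cinner (a l) (a l)))"
  proof -
    have "\<Lambda> ** \<rho> ** \<Lambda> = (\<Sum>l\<in>UNIV. (\<Lambda> ** A l) ** \<rho>0 ** adj (\<Lambda> ** A l))"
      by (simp add: \<rho>_def matrix_sum_ldistrib matrix_sum_rdistrib adj_matrix_mult \<Lambda>_sa matrix_mul_assoc)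
    then show ?thesis
      by (simp add: trace_sum Re_sum \<rho>0_def trace_sandwich_ketbra a_def)
  qed
  have xa: "trace ((A l ** \<rho>0 ** adj (D l)) ** \<Lambda>) = cinner (x l) (a l)" for l
    by (metis trace_mul_sym matrix_mul_assoc \<rho>0_def trace_sandwich_ketbra x_def a_def)
  have ax: "trace ((D l ** \<rho>0 ** adj (A l)) ** \<Lambda>) = cinner (a l) (x l)" for l
  proof -
    have "(D l ** \<rho>0 ** adj (A l)) ** \<Lambda> = D l ** \<rho>0 ** adj (\<Lambda> ** A l)"
      by (simp add: adj_matrix_mult \<Lambda>_sa matrix_mul_assoc)
    then show ?thesis
      by (simp add: \<rho>0_def trace_sandwich_ketbra x_def a_def)
  qed
  have "trace (\<Lambda> ** \<rho> ** \<Lambda>) = trace ((1/2 :: real) *\<^sub>R (\<rho> ** \<Lambda> + \<Lambda> ** \<rho>) ** \<Lambda>)"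
  proof -
    have "trace (\<rho> ** \<Lambda> ** \<Lambda>) = trace (\<Lambda> ** \<rho> ** \<Lambda>)"
      by (metis trace_mul_sym matrix_mul_assoc)
    then show ?thesis
      by (simp add: scalar_matrix_assoc[symmetric] matrix_add_rdistrib trace_scaleR trace_add)
  qed
  also have "\<dots> = (\<Sum>l\<in>UNIV. trace ((A l ** \<rho>0 ** adj (D l)) ** \<Lambda>) + trace ((D l ** \<rho>0 ** adj (A l)) ** \<Lambda>))"
    by (simp only: sld[symmetric] matrix_sum_rdistrib matrix_add_rdistrib trace_sum trace_add)
  finally have pair: "Re (trace (\<Lambda> ** \<rho> ** \<Lambda>)) = (\<Sum>l\<in>UNIV. Re (cinner (x l) (a l) + cinner (a l) (x l)))"
    by (simp only: xa ax Re_sum)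
  have "(\<Sum>l\<in>UNIV. Re (cinner (x l) (a l) + cinner (a l) (x l)))
      \<le> 1/2 * (\<Sum>l\<in>UNIV. Re (cinner (a l) (a l))) + 2 * (\<Sum>l\<in>UNIV. Re (cinner (x l) (x l)))"
    unfolding sum_distrib_left sum.distrib[symmetric] by (intro sum_mono cinner_cross_le)
  moreover have "(\<Sum>l\<in>UNIV. Re (trace (D l ** \<rho>0 ** adj (D l)))) = (\<Sum>l\<in>UNIV. Re (cinner (x l) (x l)))"
    by (simp add: \<rho>0_def trace_sandwich_ketbra x_def)
  ultimately show ?thesis
    using sq pair by linarith
qed

theorem lemma7:
  fixes E :: "'k::finite \<Rightarrow> real^'m::finite \<Rightarrow> complex^'d::finite^'d"
    and U :: "'d \<Rightarrow> real^'m \<Rightarrow> complex^'d^'d"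
    and p :: "'d \<Rightarrow> real^'m \<Rightarrow> real"
    and w :: "'d \<Rightarrow> real^'m \<Rightarrow> complex^'d"
    and \<psi>0 :: "complex^'d"
    and L :: "'m \<Rightarrow> complex^'d^'d"
    and \<theta> :: "real^'m"
  defines "\<rho>0 \<equiv> ketbra \<psi>0 \<psi>0"
  defines "\<rho>out \<equiv> (\<lambda>t. kraus_apply (\<lambda>k. E k t) \<rho>0)"
  assumes psi_unit: "cinner \<psi>0 \<psi>0 = 1"
    and E_diff: "\<And>k t. E k differentiable (at t)"
    and E_kraus: "\<And>t. (\<Sum>k\<in>UNIV. adj (E k t) ** E k t) = mat 1"
    and U_diff: "\<And>l t. U l differentiable (at t)"
    and U_same: "\<And>t \<rho>. kraus_apply (\<lambda>l. U l t) \<rho> = kraus_apply (\<lambda>k. E k t) \<rho>"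
    and U_canon: "\<And>t j k. trace (U k t ** \<rho>0 ** adj (U j t))
                     = (if j = k then complex_of_real (p k t) else 0)"
    and w_diff: "\<And>k t. w k differentiable (at t)"
    and w_orth: "\<And>t j k. cinner (w j t) (w k t) = (if j = k then 1 else 0)"
    and w_def: "\<And>t k. p k t > 0 \<Longrightarrow> w k t = (1 / sqrt (p k t)) *\<^sub>R (U k t *v \<psi>0)"
    and rho_out_eq: "\<And>t. \<rho>out t = (\<Sum>k\<in>UNIV. p k t *\<^sub>R ketbra (w k t) (w k t))"
    and L_sa: "\<And>j. adj (L j) = L j"
    and L_sld: "\<And>j. pderiv \<rho>out \<theta> j
                  = (1/2 :: real) *\<^sub>R (\<rho>out \<theta> ** L j + L j ** \<rho>out \<theta>)"
  shows "\<forall>v::real^'m. v \<bullet> (SLD_info L (\<rho>out \<theta>) *v v) \<le> v \<bullet> (SM_bound U \<rho>0 \<theta> *v v)"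
proof
  fix v :: "real^'m"
  define \<Lambda> where "\<Lambda> = (\<Sum>j\<in>UNIV. v$j *\<^sub>R L j)"
  define D where "D l = frechet_derivative (U l) (at \<theta>) v" for l
  have \<Lambda>_sa: "adj \<Lambda> = \<Lambda>"
    by (simp add: \<Lambda>_def adj_sum adj_scaleR L_sa)
  have \<rho>out_U: "\<rho>out = (\<lambda>t. kraus_apply (\<lambda>l. U l t) \<rho>0)"
    by (simp add: \<rho>out_def U_same)
  have "(\<Sum>l\<in>UNIV. U l \<theta> ** \<rho>0 ** adj (D l) + D l ** \<rho>0 ** adj (U l \<theta>))
      = frechet_derivative \<rho>out (at \<theta>) v"
    unfolding \<rho>out_U D_def by (rule frechet_derivative_kraus_apply(2)[OF U_diff, symmetric])
  also have "\<dots> = (\<Sum>j\<in>UNIV. v$j *\<^sub>R pderiv \<rho>out \<theta> j)"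
    unfolding \<rho>out_U by (rule sum_scaleR_pderiv[OF kraus_apply_differentiable[OF U_diff], symmetric])
  also have "\<dots> = (1/2 :: real) *\<^sub>R (\<rho>out \<theta> ** \<Lambda> + \<Lambda> ** \<rho>out \<theta>)"
    unfolding L_sld \<Lambda>_def
    by (simp add: matrix_sum_ldistrib matrix_sum_rdistrib matrix_scalar_ac scalar_matrix_assoc[symmetric]
        scaleR_sum_right scaleR_add_right sum.distrib)
  finally have "Re (trace (\<Lambda> ** \<rho>out \<theta> ** \<Lambda>)) \<le> 4 * (\<Sum>l\<in>UNIV. Re (trace (D l ** \<rho>0 ** adj (D l))))"
    using SLD_quadratic_le_sandwich_derivative[OF \<Lambda>_sa, of "\<lambda>l. U l \<theta>" \<psi>0 D]
    by (simp add: \<rho>0_def \<rho>out_U kraus_apply_def)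
  then show "v \<bullet> (SLD_info L (\<rho>out \<theta>) *v v) \<le> v \<bullet> (SM_bound U \<rho>0 \<theta> *v v)"
    by (simp add: quadratic_form_SLD_info[OF L_sa] quadratic_form_SM_bound[OF U_diff] \<Lambda>_def D_def)
qed

end
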